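(* The set of extreme points of $\mathcal{R}$ is exactly $\tilde{\mathcal{R}}=\{\chi_\omega:\omega\in\Omega^*\}$.
   Context: $L^{\infty}(\mathbb{R}_+)$: real-valued essentially bounded measurable functions on $[0,\infty)$; a mean is a positive linear functional with $\varphi(1)=1$. $\mathcal{R}$ is the set of means $\varphi$ on $L^{\infty}(\mathbb{R}_+)$ with $\varphi(f)\le\limsup_{x\to\infty}e^{-x}\int_0^xf(t)e^t\,dt$ for all $f$. For an ultrafilter $\mathcal{V}$ and a bounded real function $g$, $\mathcal{V}\text{-}\lim_xg(x)$ is the usual limit along $\mathcal{V}$. Let $\beta\mathbb{N}_0$ be the Stone–Čech compactification of $\mathbb{N}_0$ (points = ultrafilters), $\tau$ the extension of $n\mapsto n+1$, $\mathbb{N}_0^*=\beta\mathbb{N}_0\setminus\mathbb{N}_0$, $\Omega=(\beta\mathbb{N}_0\times[0,1])/\sim$ with $(\tau\eta,0)\sim(\eta,1)$ (the maximal ideal space of the uniformly continuous bounded functions on $\mathbb{R}_+$, containing $\mathbb{R}_+$ via $(n,t)\mapsto n+t$), and $\Omega^*=\Omega\setminus\mathbb{R}_+$. Each $\omega=(\eta,t)$ is identified with the ultrafilter $\{A+t:A\in\eta\}$ on $\mathbb{R}_+$. For $\omega\in\Omega^*$, $\chi_\omega(f)=\omega\text{-}\lim_xe^{-x}\int_0^xf(t)e^t\,dt$. *)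

theory Defs
  imports "HOL-Analysis.Analysis"
begin

text \<open>L-infinity of the half line: Lebesgue measurable real functions on [0,oo)
  that are essentially bounded there. Functions are represented by raw functions
  real => real; values on negative reals are irrelevant.\<close>
definition Linf :: "(real \<Rightarrow> real) set" where
  "Linf = {f. f \<in> borel_measurable (restrict_space lebesgue {0..}) \<and>
              (\<exists>B. AE x in lebesgue. x \<ge> 0 \<longrightarrow> \<bar>f x\<bar> \<le> B)}"

text \<open>A mean: positive (a.e. nonnegative argument gives nonnegative value) linear
  functional on Linf with value 1 at the constant 1. Functionals are normalised to
  vanish outside Linf, so that functionals on Linf correspond to HOL functions.\<close>
definition is_mean :: "((real \<Rightarrow> real) \<Rightarrow> real) \<Rightarrow> bool" where
  "is_mean \<phi> \<longleftrightarrow>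
     (\<forall>f. f \<notin> Linf \<longrightarrow> \<phi> f = 0) \<and>
     (\<forall>f\<in>Linf. \<forall>g\<in>Linf. \<forall>a b. \<phi> (\<lambda>x. a * f x + b * g x) = a * \<phi> f + b * \<phi> g) \<and>
     (\<forall>f\<in>Linf. (AE x in lebesgue. x \<ge> 0 \<longrightarrow> f x \<ge> 0) \<longrightarrow> \<phi> f \<ge> 0) \<and>
     \<phi> (\<lambda>_. 1) = 1"

definition avg :: "(real \<Rightarrow> real) \<Rightarrow> real \<Rightarrow> real" where
  "avg f x = exp (- x) * (LINT t:{0..x}|lebesgue. f t * exp t)"

definition R_means :: "((real \<Rightarrow> real) \<Rightarrow> real) set" where
  "R_means = {\<phi>. is_mean \<phi> \<and>
      (\<forall>f\<in>Linf. ereal (\<phi> f) \<le> Limsup at_top (\<lambda>x. ereal (avg f x)))}"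

definition extreme_points :: "((real \<Rightarrow> real) \<Rightarrow> real) set \<Rightarrow> ((real \<Rightarrow> real) \<Rightarrow> real) set" where
  "extreme_points S = {\<phi>\<in>S. \<not> (\<exists>\<psi>1\<in>S. \<exists>\<psi>2\<in>S. \<exists>u::real. 0 < u \<and> u < 1 \<and> \<psi>1 \<noteq> \<psi>2 \<and>
                            \<phi> = (\<lambda>f. u * \<psi>1 f + (1 - u) * \<psi>2 f))}"

definition ultrafilter :: "'a filter \<Rightarrow> bool" where
  "ultrafilter F \<longleftrightarrow> F \<noteq> bot \<and> (\<forall>P. eventually P F \<or> eventually (\<lambda>x. \<not> P x) F)"

definition free_ultrafilter_nat :: "nat filter \<Rightarrow> bool" where
  "free_ultrafilter_nat \<eta> \<longleftrightarrow> ultrafilter \<eta> \<and> \<eta> \<le> cofinite"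

text \<open>The ultrafilter {A + t : A in eta} on R_+ associated to omega = (eta, t).\<close>
definition omega_filter :: "nat filter \<Rightarrow> real \<Rightarrow> real filter" where
  "omega_filter \<eta> t = filtermap (\<lambda>n. real n + t) \<eta>"

definition chi :: "nat filter \<Rightarrow> real \<Rightarrow> (real \<Rightarrow> real) \<Rightarrow> real" where
  "chi \<eta> t f = (if f \<in> Linf then Lim (omega_filter \<eta> t) (avg f) else 0)"

definition R_tilde :: "((real \<Rightarrow> real) \<Rightarrow> real) set" where
  "R_tilde = {chi \<eta> t | \<eta> t. free_ultrafilter_nat \<eta> \<and> t \<in> {0..1}}"

end

theory Submission
  imports Defs
begin

text \<open>
  For the product \<open>k \<star> f = avg k \<cdot> f + k \<cdot> avg f - avg k \<cdot> avg f\<close> one has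
  \<open>avg (k \<star> f) = avg k \<cdot> avg f\<close>, and every mean \<open>\<psi> \<in> \<R>\<close> satisfies \<open>(\<psi> h)\<^sup>2 \<le> \<psi> (h \<star> h)\<close>.
  Since \<open>\<chi>\<^sub>\<omega>\<close> is multiplicative for \<open>\<star>\<close>, a decomposition \<open>\<chi>\<^sub>\<omega> = u \<psi>\<^sub>1 + (1 - u) \<psi>\<^sub>2\<close> forces
  \<open>\<psi>\<^sub>i (h \<star> h) = 0\<close> for \<open>h = f - \<chi>\<^sub>\<omega> f\<close>, hence \<open>\<psi>\<^sub>i f = \<chi>\<^sub>\<omega> f\<close>.

  Conversely an extreme point \<open>\<phi>\<close> is multiplicative: if \<open>avg k\<close> takes values in \<open>[0, 1]\<close>, the
  functionals \<open>f \<mapsto> \<phi> (k \<star> f)\<close> and \<open>f \<mapsto> \<phi> (f - k \<star> f)\<close> are, after normalisation, again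
  in \<open>\<R>\<close>, so by extremality they are proportional, i.e. \<open>\<phi> (k \<star> f) = \<phi> (k \<star> 1) \<cdot> \<phi> f\<close>;
  an affine rescaling of \<open>k\<close> removes the restriction on \<open>avg k\<close>. Multiplicativity gives \<open>\<phi> (h \<star> h) = 0\<close>
  for every centred \<open>h\<close>, so the sets where \<open>avg g\<close> is close to \<open>\<phi> g\<close> form a filter base on
  \<open>\<real>\<^sub>+\<close>. An ultrafilter refining it, split into integer and fractional parts, is a point
  \<open>\<omega> \<in> \<Omega>\<^sup>*\<close>, and \<open>\<phi> = \<chi>\<^sub>\<omega>\<close> because \<open>avg g\<close> is Lipschitz.
\<close>

section \<open>Integration on the half line\<close>

interpretation lebesgue: sigma_finite_measure "lebesgue :: real measure"
proof
  show "\<exists>A::real set set. countable A \<and> A \<subseteq> sets lebesgue \<and> \<Union> A = space lebesgue \<and>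
      (\<forall>a\<in>A. emeasure lebesgue a \<noteq> \<infinity>)"
    by (rule exI[of _ "range (\<lambda>n::nat. {- real n..real n})"])
      (auto, metis abs_le_D1 abs_le_iff real_arch_simple minus_le_iff)
qed

interpretation lebesgue_pair: pair_sigma_finite "lebesgue :: real measure" "lebesgue :: real measure" ..

lemma borel_measurable_lebesgue_id [measurable]: "(\<lambda>x::real. x) \<in> borel_measurable lebesgue"
  by (rule measurable_completion) simp

lemma Fubini_triangle:
  fixes u v :: "real \<Rightarrow> real"
  assumes u: "integrable lebesgue u" and v: "integrable lebesgue v"
  defines "U \<equiv> \<lambda>t. \<integral>s. indicator {..t} s * u s \<partial>lebesgue"
    and "V \<equiv> \<lambda>s. \<integral>t. indicator {s..} t * v t \<partial>lebesgue"
  shows "integrable lebesgue (\<lambda>t. U t * v t)" and "integrable lebesgue (\<lambda>s. u s * V s)"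
    and "(\<integral>t. U t * v t \<partial>lebesgue) = (\<integral>s. u s * V s \<partial>lebesgue)"
proof -
  have [measurable]: "u \<in> borel_measurable lebesgue" "v \<in> borel_measurable lebesgue"
    using u v by auto
  define h where "h = (\<lambda>s t. indicator {..t} s * (u s * v t) :: real)"
  have "integrable (lebesgue \<Otimes>\<^sub>M lebesgue) (\<lambda>(s, t). u s * v t)"
  proof (rule lebesgue_pair.Fubini_integrable)
    have "(\<lambda>s. \<integral>t. norm (u s * v t) \<partial>lebesgue) = (\<lambda>s. \<bar>u s\<bar> * (\<integral>t. \<bar>v t\<bar> \<partial>lebesgue))"
      by (simp add: abs_mult)
    then show "integrable lebesgue (\<lambda>s. \<integral>t. norm (case (s, t) of (s, t) \<Rightarrow> u s * v t) \<partial>lebesgue)"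
      using u by simp
  qed (use v in auto)
  moreover have "case_prod h \<in> borel_measurable (lebesgue \<Otimes>\<^sub>M lebesgue)"
  proof -
    have "case_prod h = (\<lambda>(s, t). if s \<le> t then u s * v t else 0)"
      by (auto simp: h_def fun_eq_iff)
    then show ?thesis by simp
  qed
  ultimately have h: "integrable (lebesgue \<Otimes>\<^sub>M lebesgue) (case_prod h)"
    by (rule Bochner_Integration.integrable_bound) (auto simp: h_def abs_mult split: split_indicator)
  have inner_s: "(\<integral>s. h s t \<partial>lebesgue) = U t * v t" for t
    by (simp add: h_def U_def mult.assoc[symmetric])
  have inner_t: "(\<integral>t. h s t \<partial>lebesgue) = u s * V s" for s
  proof -
    have "(\<lambda>t. h s t) = (\<lambda>t. u s * (indicator {s..} t * v t))"
      by (auto simp: h_def fun_eq_iff split: split_indicator)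
    then show ?thesis by (simp add: V_def)
  qed
  show "integrable lebesgue (\<lambda>t. U t * v t)"
    using lebesgue_pair.integrable_snd[OF h] by (simp add: inner_s)
  show "integrable lebesgue (\<lambda>s. u s * V s)"
    using lebesgue_pair.integrable_fst[OF h] by (simp add: inner_t)
  show "(\<integral>t. U t * v t \<partial>lebesgue) = (\<integral>s. u s * V s \<partial>lebesgue)"
    using lebesgue_pair.Fubini_integral[OF h] by (simp add: inner_s inner_t)
qed

lemma integral_atLeast_Icc:
  fixes v :: "real \<Rightarrow> real"
  assumes v: "integrable lebesgue (\<lambda>t. indicator {0..x} t * v t)" and s: "s \<in> {0..x}"
  shows "(\<integral>t. indicator {s..} t * (indicator {0..x} t * v t) \<partial>lebesgue)
    = (\<integral>t. indicator {0..x} t * v t \<partial>lebesgue) - (\<integral>t. indicator {0..s} t * v t \<partial>lebesgue)"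
proof -
  have "(\<lambda>t. indicator {0..s} t * v t) = (\<lambda>t. indicator {0..s} t * (indicator {0..x} t * v t))"
    using s by (auto simp: fun_eq_iff split: split_indicator)
  then have vs: "integrable lebesgue (\<lambda>t. indicator {0..s} t * v t)"
    using integrable_mult_indicator[OF _ v, of "{0..s}"] by simp
  have "AE t in lebesgue. indicator {s..} t * (indicator {0..x} t * v t)
      = indicator {0..x} t * v t - indicator {0..s} t * v t"
    using AE_completion[OF AE_lborel_singleton[of s]]
    by eventually_elim (use s in \<open>auto split: split_indicator\<close>)
  then have "(\<integral>t. indicator {s..} t * (indicator {0..x} t * v t) \<partial>lebesgue)
      = (\<integral>t. indicator {0..x} t * v t - indicator {0..s} t * v t \<partial>lebesgue)"
    using v vs by (intro integral_cong_AE) auto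
  then show ?thesis using v vs by simp
qed

lemma integral_Icc_product_rule:
  fixes u v :: "real \<Rightarrow> real"
  assumes u: "integrable lebesgue (\<lambda>s. indicator {0..x} s * u s)"
    and v: "integrable lebesgue (\<lambda>s. indicator {0..x} s * v s)"
  defines "U \<equiv> \<lambda>t. \<integral>s. indicator {0..t} s * u s \<partial>lebesgue"
    and "V \<equiv> \<lambda>t. \<integral>s. indicator {0..t} s * v s \<partial>lebesgue"
  shows "integrable lebesgue (\<lambda>t. indicator {0..x} t * (U t * v t + u t * V t))"
    and "(\<integral>t. indicator {0..x} t * (U t * v t + u t * V t) \<partial>lebesgue) = U x * V x"
proof -
  define uu where "uu = (\<lambda>s. indicator {0..x} s * u s)"
  define vv where "vv = (\<lambda>s. indicator {0..x} s * v s)"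
  note F = Fubini_triangle[OF u[folded uu_def] v[folded vv_def]]
  have left: "(\<integral>s. indicator {..t} s * uu s \<partial>lebesgue) * vv t = indicator {0..x} t * (U t * v t)" for t
  proof -
    have "t \<in> {0..x} \<Longrightarrow> (\<lambda>s. indicator {..t} s * uu s) = (\<lambda>s. indicator {0..t} s * u s)"
      by (auto simp: uu_def fun_eq_iff split: split_indicator)
    then show ?thesis by (cases "t \<in> {0..x}") (auto simp: vv_def U_def)
  qed
  have right: "uu s * (\<integral>t. indicator {s..} t * vv t \<partial>lebesgue) = uu s * V x - indicator {0..x} s * (u s * V s)"
    for s
  proof (cases "s \<in> {0..x}")
    case True
    then show ?thesis
      using integral_atLeast_Icc[OF v True] by (simp add: uu_def vv_def V_def right_diff_distrib)
  qed (simp add: uu_def)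
  have UV: "integrable lebesgue (\<lambda>t. indicator {0..x} t * (U t * v t))"
    using F(1) by (simp add: left)
  have uV: "integrable lebesgue (\<lambda>s. indicator {0..x} s * (u s * V s))"
  proof -
    have "integrable lebesgue (\<lambda>s. uu s * V x - uu s * (\<integral>t. indicator {s..} t * vv t \<partial>lebesgue))"
      using u F(2) by (simp add: uu_def)
    then show ?thesis by (simp add: right)
  qed
  show "integrable lebesgue (\<lambda>t. indicator {0..x} t * (U t * v t + u t * V t))"
    using Bochner_Integration.integrable_add[OF UV uV] by (simp add: distrib_left)
  have "(\<integral>t. indicator {0..x} t * (U t * v t) \<partial>lebesgue)
      = (\<integral>t. (\<integral>s. indicator {..t} s * uu s \<partial>lebesgue) * vv t \<partial>lebesgue)"
    by (simp add: left)
  also have "\<dots> = (\<integral>s. uu s * (\<integral>t. indicator {s..} t * vv t \<partial>lebesgue) \<partial>lebesgue)"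
    by (rule F(3))
  also have "\<dots> = U x * V x - (\<integral>s. indicator {0..x} s * (u s * V s) \<partial>lebesgue)"
    unfolding right using u uV by (simp add: U_def uu_def)
  finally have "(\<integral>t. indicator {0..x} t * (U t * v t) \<partial>lebesgue)
      = U x * V x - (\<integral>s. indicator {0..x} s * (u s * V s) \<partial>lebesgue)" .
  then show "(\<integral>t. indicator {0..x} t * (U t * v t + u t * V t) \<partial>lebesgue) = U x * V x"
    using UV uV by (simp add: distrib_left)
qed

lemma lebesgue_integral_FTC_Icc:
  fixes f F :: "real \<Rightarrow> real"
  assumes "a \<le> b" and F: "\<And>x. x \<in> {a..b} \<Longrightarrow> (F has_real_derivative f x) (at x within {a..b})"
    and f: "continuous_on {a..b} f"
  shows "(\<integral>t. indicator {a..b} t * f t \<partial>lebesgue) = F b - F a"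
proof -
  have "(\<lambda>t. indicator {a..b} t *\<^sub>R f t) \<in> borel_measurable borel"
    by (rule borel_measurable_continuous_on_indicator[OF _ f]) simp
  then have "(\<integral>t. indicator {a..b} t * f t \<partial>lebesgue) = (\<integral>t. indicator {a..b} t *\<^sub>R f t \<partial>lborel)"
    by (simp add: integral_completion)
  also have "\<dots> = F b - F a"
    using assms by (intro integral_FTC_atLeastAtMost)
      (auto simp: has_real_derivative_iff_has_vector_derivative[symmetric])
  finally show ?thesis .
qed

lemma integral_Icc_exp:
  fixes a b :: real
  shows "a \<le> b \<Longrightarrow> (\<integral>t. indicator {a..b} t * exp t \<partial>lebesgue) = exp b - exp a"
  by (rule lebesgue_integral_FTC_Icc) (auto intro!: derivative_eq_intros continuous_intros)

lemma integral_Icc_exp_minus: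
  fixes a b :: real
  shows "a \<le> b \<Longrightarrow> (\<integral>t. indicator {a..b} t * - exp (- t) \<partial>lebesgue) = exp (- b) - exp (- a)"
  by (rule lebesgue_integral_FTC_Icc) (auto intro!: derivative_eq_intros continuous_intros)

lemma integrable_lebesgue_Icc_continuous:
  fixes f :: "real \<Rightarrow> real"
  assumes "continuous_on UNIV f"
  shows "integrable lebesgue (\<lambda>t. indicator {a..b} t * f t)"
proof -
  have [measurable]: "f \<in> borel_measurable borel"
    using assms by (rule borel_measurable_continuous_onI)
  have "integrable lborel (\<lambda>t. f t * indicator {a..b} t)"
    using assms by (intro borel_integrable_atLeastAtMost) (simp add: continuous_on_eq_continuous_at)
  moreover have "(\<lambda>t. indicator {a..b} t * f t) \<in> borel_measurable borel"
    by measurable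
  ultimately show ?thesis by (simp add: integrable_completion mult.commute)
qed

section \<open>Essentially bounded functions\<close>

lemma Linf_iff: "f \<in> Linf \<longleftrightarrow> (\<lambda>t. indicator {0..} t * f t) \<in> borel_measurable lebesgue \<and>
    (\<exists>B. AE x in lebesgue. x \<ge> 0 \<longrightarrow> \<bar>f x\<bar> \<le> B)"
  unfolding Linf_def by (subst borel_measurable_restrict_space_iff) auto

lemma Linf_measurable: "f \<in> Linf \<Longrightarrow> (\<lambda>t. indicator {0..} t * f t) \<in> borel_measurable lebesgue"
  by (simp add: Linf_iff)

lemma Linf_bound:
  assumes "f \<in> Linf"
  obtains B where "B \<ge> 0" "AE x in lebesgue. x \<ge> 0 \<longrightarrow> \<bar>f x\<bar> \<le> B"
proof -
  obtain B where "AE x in lebesgue. x \<ge> 0 \<longrightarrow> \<bar>f x\<bar> \<le> B" using assms by (auto simp: Linf_iff)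
  then have "AE x in lebesgue. x \<ge> 0 \<longrightarrow> \<bar>f x\<bar> \<le> max B 0" by eventually_elim auto
  then show ?thesis using that[of "max B 0"] by auto
qed

lemma Linf_linear:
  assumes f: "f \<in> Linf" and g: "g \<in> Linf"
  shows "(\<lambda>x. a * f x + b * g x) \<in> Linf"
proof -
  obtain B C where B: "AE x in lebesgue. x \<ge> 0 \<longrightarrow> \<bar>f x\<bar> \<le> B"
    and C: "AE x in lebesgue. x \<ge> 0 \<longrightarrow> \<bar>g x\<bar> \<le> C"
    using f g by (auto simp: Linf_iff)
  have "(\<lambda>t. a * (indicator {0..} t * f t) + b * (indicator {0..} t * g t)) \<in> borel_measurable lebesgue"
    using Linf_measurable[OF f] Linf_measurable[OF g] by measurable
  moreover have "AE x in lebesgue. x \<ge> 0 \<longrightarrow> \<bar>a * f x + b * g x\<bar> \<le> \<bar>a\<bar> * B + \<bar>b\<bar> * C"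
    using B C
  proof eventually_elim
    case (elim x)
    then show ?case
      using abs_triangle_ineq[of "a * f x" "b * g x"]
        mult_left_mono[of "\<bar>f x\<bar>" B "\<bar>a\<bar>"] mult_left_mono[of "\<bar>g x\<bar>" C "\<bar>b\<bar>"]
      by (auto simp: abs_mult)
  qed
  ultimately show ?thesis by (auto simp: Linf_iff algebra_simps)
qed

lemma Linf_mult:
  assumes f: "f \<in> Linf" and g: "g \<in> Linf"
  shows "(\<lambda>x. f x * g x) \<in> Linf"
proof -
  obtain B where B: "B \<ge> 0" "AE x in lebesgue. x \<ge> 0 \<longrightarrow> \<bar>f x\<bar> \<le> B" using Linf_bound[OF f] .
  obtain C where C: "C \<ge> 0" "AE x in lebesgue. x \<ge> 0 \<longrightarrow> \<bar>g x\<bar> \<le> C" using Linf_bound[OF g] .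
  have "(\<lambda>t. (indicator {0..} t * f t) * (indicator {0..} t * g t)) \<in> borel_measurable lebesgue"
    using Linf_measurable[OF f] Linf_measurable[OF g] by measurable
  moreover have "(\<lambda>t. (indicator {0..} t * f t) * (indicator {0..} t * g t)) = (\<lambda>t. indicator {0..} t * (f t * g t))"
    by (auto simp: fun_eq_iff split: split_indicator)
  moreover have "AE x in lebesgue. x \<ge> 0 \<longrightarrow> \<bar>f x * g x\<bar> \<le> B * C"
    using B(2) C(2) by eventually_elim (auto simp: abs_mult intro: mult_mono)
  ultimately show ?thesis by (auto simp: Linf_iff)
qed

lemma Linf_continuous_on:
  assumes "continuous_on {0..} g" and "\<And>x. x \<ge> 0 \<Longrightarrow> \<bar>g x\<bar> \<le> B"
  shows "g \<in> Linf"
proof -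
  have "g \<in> borel_measurable (lebesgue_on {0..})"
    by (rule continuous_imp_measurable_on_sets_lebesgue[OF assms(1)]) auto
  then show ?thesis using assms(2) unfolding Linf_def by auto
qed

lemma Linf_const [simp]: "(\<lambda>_. c) \<in> Linf"
  by (rule Linf_continuous_on[where B="\<bar>c\<bar>"]) auto

lemma Linf_add: "f \<in> Linf \<Longrightarrow> g \<in> Linf \<Longrightarrow> (\<lambda>x. f x + g x) \<in> Linf"
  using Linf_linear[of f g 1 1] by simp

lemma Linf_diff: "f \<in> Linf \<Longrightarrow> g \<in> Linf \<Longrightarrow> (\<lambda>x. f x - g x) \<in> Linf"
  using Linf_linear[of f g 1 "-1"] by simp

lemma Linf_minus: "f \<in> Linf \<Longrightarrow> (\<lambda>x. - f x) \<in> Linf"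
  using Linf_linear[of f f "-1" 0] by simp

lemma integrable_Icc_Linf_mult:
  assumes f: "f \<in> Linf" and g: "g \<in> borel_measurable lebesgue"
    and g_bound: "\<And>t. 0 \<le> t \<Longrightarrow> t \<le> x \<Longrightarrow> \<bar>g t\<bar> \<le> C"
  shows "integrable lebesgue (\<lambda>t. indicator {0..x} t * (f t * g t))"
proof -
  obtain B where B: "B \<ge> 0" "AE x in lebesgue. x \<ge> 0 \<longrightarrow> \<bar>f x\<bar> \<le> B" using Linf_bound[OF f] .
  have "(\<lambda>t. indicator {0..x} t * ((indicator {0..} t * f t) * g t)) \<in> borel_measurable lebesgue"
    using Linf_measurable[OF f] g by measurable
  moreover have "(\<lambda>t. indicator {0..x} t * ((indicator {0..} t * f t) * g t)) = (\<lambda>t. indicator {0..x} t * (f t * g t))"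
    by (auto simp: fun_eq_iff split: split_indicator)
  moreover have "integrable lebesgue (\<lambda>t. indicator {0..x} t * (B * \<bar>C\<bar>))"
    by (rule integrable_lebesgue_Icc_continuous) simp
  moreover have "AE t in lebesgue. norm (indicator {0..x} t * (f t * g t)) \<le> norm (indicator {0..x} t * (B * \<bar>C\<bar>))"
    using B(2)
  proof eventually_elim
    case (elim t)
    then show ?case
      using g_bound[of t] B(1) by (auto simp: abs_mult intro: mult_mono split: split_indicator)
  qed
  ultimately show ?thesis by (metis Bochner_Integration.integrable_bound)
qed

section \<open>The exponential average\<close>

definition exp_integral :: "(real \<Rightarrow> real) \<Rightarrow> real \<Rightarrow> real" where
  "exp_integral f x = (\<integral>t. indicator {0..x} t * (f t * exp t) \<partial>lebesgue)"

lemma avg_eq_exp_integral: "avg f x = exp (- x) * exp_integral f x"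
  by (simp add: avg_def exp_integral_def set_lebesgue_integral_def)

lemma integrable_exp_integral:
  "f \<in> Linf \<Longrightarrow> integrable lebesgue (\<lambda>t. indicator {0..x} t * (f t * exp t))"
  by (rule integrable_Icc_Linf_mult[where C="exp x"]) auto

lemma exp_integral_linear:
  assumes "f \<in> Linf" "g \<in> Linf"
  shows "exp_integral (\<lambda>x. a * f x + b * g x) x = a * exp_integral f x + b * exp_integral g x"
proof -
  have "exp_integral (\<lambda>x. a * f x + b * g x) x = (\<integral>t. a * (indicator {0..x} t * (f t * exp t)) +
      b * (indicator {0..x} t * (g t * exp t)) \<partial>lebesgue)"
    unfolding exp_integral_def by (intro Bochner_Integration.integral_cong) (auto simp: algebra_simps)
  then show ?thesis
    using integrable_exp_integral[OF assms(1), of x] integrable_exp_integral[OF assms(2), of x]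
    by (simp add: exp_integral_def)
qed

lemma avg_linear:
  "f \<in> Linf \<Longrightarrow> g \<in> Linf \<Longrightarrow> avg (\<lambda>x. a * f x + b * g x) x = a * avg f x + b * avg g x"
  using exp_integral_linear by (simp add: avg_eq_exp_integral algebra_simps)

lemma avg_add: "f \<in> Linf \<Longrightarrow> g \<in> Linf \<Longrightarrow> avg (\<lambda>x. f x + g x) x = avg f x + avg g x"
  using avg_linear[of f g 1 1] by simp

lemma avg_diff: "f \<in> Linf \<Longrightarrow> g \<in> Linf \<Longrightarrow> avg (\<lambda>x. f x - g x) x = avg f x - avg g x"
  using avg_linear[of f g 1 "-1"] by simp

lemma avg_minus: "f \<in> Linf \<Longrightarrow> avg (\<lambda>x. - f x) x = - avg f x"
  using avg_linear[of f f "-1" 0] by simp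

lemma avg_const:
  assumes "0 \<le> x"
  shows "avg (\<lambda>_. c) x = c * (1 - exp (- x))"
proof -
  have "exp_integral (\<lambda>_. c) x = c * (exp x - 1)"
    using integral_Icc_exp[OF assms] by (simp add: exp_integral_def mult.left_commute)
  then show ?thesis by (simp add: avg_eq_exp_integral algebra_simps exp_minus field_simps)
qed

lemma avg_nonneg:
  assumes "AE x in lebesgue. x \<ge> 0 \<longrightarrow> f x \<ge> 0"
  shows "avg f x \<ge> 0"
proof -
  have "AE t in lebesgue. 0 \<le> indicator {0..x} t * (f t * exp t)"
    using assms by eventually_elim (auto split: split_indicator)
  then show ?thesis
    unfolding avg_eq_exp_integral exp_integral_def by (simp add: integral_nonneg_AE)
qed

lemma exp_integral_0 [simp]: "exp_integral f 0 = 0"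
proof -
  have "AE t in lebesgue. indicator {0..0} t * (f t * exp t) = (0::real)"
    using AE_completion[OF AE_lborel_singleton[of 0]] by eventually_elim auto
  then show ?thesis unfolding exp_integral_def by (simp add: integral_eq_zero_AE)
qed

lemma abs_integral_le_AE:
  fixes g h :: "'a \<Rightarrow> real"
  assumes "integrable M g" "integrable M h" "AE t in M. \<bar>g t\<bar> \<le> h t"
  shows "\<bar>\<integral>t. g t \<partial>M\<bar> \<le> (\<integral>t. h t \<partial>M)"
proof -
  have "\<bar>\<integral>t. g t \<partial>M\<bar> \<le> (\<integral>t. \<bar>g t\<bar> \<partial>M)"
    using integral_norm_bound[of M g] by simp
  also have "\<dots> \<le> (\<integral>t. h t \<partial>M)"
    using assms by (intro integral_mono_AE) auto
  finally show ?thesis .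
qed

lemma abs_exp_integral_diff_le:
  assumes f: "f \<in> Linf" and "B \<ge> 0" and B: "AE x in lebesgue. x \<ge> 0 \<longrightarrow> \<bar>f x\<bar> \<le> B"
    and "0 \<le> y" "y \<le> x"
  shows "\<bar>exp_integral f x - exp_integral f y\<bar> \<le> B * (exp x - exp y)"
proof -
  define g where "g t = indicator {0..x} t * (f t * exp t) - indicator {0..y} t * (f t * exp t)" for t
  have "exp_integral f x - exp_integral f y = (\<integral>t. g t \<partial>lebesgue)"
    unfolding exp_integral_def g_def using integrable_exp_integral[OF f] by simp
  also have "\<bar>\<dots>\<bar> \<le> (\<integral>t. indicator {y..x} t * (B * exp t) \<partial>lebesgue)"
  proof (rule abs_integral_le_AE)
    show "integrable lebesgue g"
      unfolding g_def using integrable_exp_integral[OF f] by simp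
    show "integrable lebesgue (\<lambda>t. indicator {y..x} t * (B * exp t))"
      by (rule integrable_lebesgue_Icc_continuous) (intro continuous_intros)
    show "AE t in lebesgue. \<bar>g t\<bar> \<le> indicator {y..x} t * (B * exp t)"
      using B
    proof eventually_elim
      case (elim t)
      show ?case
      proof (cases "t \<in> {y<..x}")
        case True
        then show ?thesis using elim assms(4) by (auto simp: g_def abs_mult)
      next
        case False
        then have "g t = 0" using assms(5) by (auto simp: g_def split: split_indicator)
        then show ?thesis using \<open>B \<ge> 0\<close> by (simp split: split_indicator)
      qed
    qed
  qed
  also have "\<dots> = B * (exp x - exp y)"
    using integral_Icc_exp[OF assms(5)] by (simp add: mult.left_commute)
  finally show ?thesis .
qed


lemma abs_avg_le:
  assumes f: "f \<in> Linf" and "B \<ge> 0" and B: "AE x in lebesgue. x \<ge> 0 \<longrightarrow> \<bar>f x\<bar> \<le> B" and x: "0 \<le> x"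
  shows "\<bar>avg f x\<bar> \<le> B * (1 - exp (- x))"
proof -
  have "\<bar>avg f x\<bar> = exp (- x) * \<bar>exp_integral f x\<bar>"
    by (simp add: avg_eq_exp_integral abs_mult)
  also have "\<dots> \<le> exp (- x) * (B * (exp x - 1))"
    using abs_exp_integral_diff_le[OF f \<open>B \<ge> 0\<close> B order_refl x] by (intro mult_left_mono) auto
  also have "\<dots> = B * (1 - exp (- x))"
    by (simp add: algebra_simps exp_minus field_simps)
  finally show ?thesis .
qed

lemma abs_avg_le_bound:
  assumes "f \<in> Linf" "B \<ge> 0" "AE x in lebesgue. x \<ge> 0 \<longrightarrow> \<bar>f x\<bar> \<le> B" "0 \<le> x"
  shows "\<bar>avg f x\<bar> \<le> B"
  using abs_avg_le[OF assms] \<open>B \<ge> 0\<close> by (smt (verit) exp_gt_zero mult_left_le)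

lemma avg_lipschitz:
  assumes f: "f \<in> Linf" and "B \<ge> 0" and B: "AE x in lebesgue. x \<ge> 0 \<longrightarrow> \<bar>f x\<bar> \<le> B"
    and "0 \<le> x" "0 \<le> y"
  shows "\<bar>avg f x - avg f y\<bar> \<le> 2 * B * \<bar>x - y\<bar>"
proof -
  have *: "\<bar>avg f x - avg f y\<bar> \<le> 2 * B * (x - y)" if "0 \<le> y" "y \<le> x" for x y
  proof -
    have "avg f x - avg f y = exp (- x) * (exp_integral f x - exp_integral f y) +
        (exp (- x) - exp (- y)) * exp_integral f y"
      by (simp add: avg_eq_exp_integral algebra_simps)
    then have "\<bar>avg f x - avg f y\<bar> \<le> exp (- x) * \<bar>exp_integral f x - exp_integral f y\<bar> +
        (exp (- y) - exp (- x)) * \<bar>exp_integral f y\<bar>"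
      using that by (auto simp: abs_mult intro!: order.trans[OF abs_triangle_ineq])
    also have "\<dots> \<le> exp (- x) * (B * (exp x - exp y)) + (exp (- y) - exp (- x)) * (B * exp y)"
      using abs_exp_integral_diff_le[OF f \<open>B \<ge> 0\<close> B that]
        abs_exp_integral_diff_le[OF f \<open>B \<ge> 0\<close> B order_refl that(1)] that \<open>B \<ge> 0\<close>
      by (intro add_mono mult_left_mono) (auto simp: right_diff_distrib)
    also have "\<dots> = 2 * (B * (1 - exp (y - x)))"
      by (simp add: algebra_simps exp_diff exp_minus field_simps)
    also have "\<dots> \<le> 2 * (B * (x - y))"
      using exp_ge_add_one_self[of "y - x"] \<open>B \<ge> 0\<close> by (intro mult_left_mono) linarith+
    finally show ?thesis by simp
  qed
  show ?thesis
    using *[of y x] *[of x y] assms(4,5) by (cases "y \<le> x") (auto simp: abs_minus_commute)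
qed

lemma Linf_avg:
  assumes f: "f \<in> Linf"
  shows "avg f \<in> Linf"
proof -
  obtain B where B: "B \<ge> 0" "AE x in lebesgue. x \<ge> 0 \<longrightarrow> \<bar>f x\<bar> \<le> B"
    using Linf_bound[OF f] .
  have "(2 * B)-lipschitz_on {0..} (avg f)"
    using avg_lipschitz[OF f B] B(1) by (intro lipschitz_onI) (auto simp: dist_real_def)
  then show ?thesis
    using abs_avg_le_bound[OF f B] by (intro Linf_continuous_on lipschitz_on_continuous_on) auto
qed


lemma avg_bounded:
  assumes "f \<in> Linf"
  obtains B where "\<And>x. x \<ge> 0 \<Longrightarrow> \<bar>avg f x\<bar> \<le> B"
proof -
  obtain B where "B \<ge> 0" "AE x in lebesgue. x \<ge> 0 \<longrightarrow> \<bar>f x\<bar> \<le> B"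
    using Linf_bound[OF assms] .
  then show ?thesis using abs_avg_le_bound[OF assms] that by blast
qed

section \<open>A product for which the average is multiplicative\<close>

text \<open>With \<open>E f t = \<integral>\<^sub>0\<^sup>t f(s) e\<^sup>s ds\<close>, the function \<open>avg_prod k f t \<cdot> e\<^sup>t\<close> is the derivative of
  \<open>e\<^sup>-\<^sup>t E k t E f t\<close>; this is where the formula comes from.\<close>

definition avg_prod :: "(real \<Rightarrow> real) \<Rightarrow> (real \<Rightarrow> real) \<Rightarrow> real \<Rightarrow> real" where
  "avg_prod k f x = avg k x * f x + k x * avg f x - avg k x * avg f x"

lemma Linf_avg_prod: "k \<in> Linf \<Longrightarrow> f \<in> Linf \<Longrightarrow> avg_prod k f \<in> Linf"
  unfolding avg_prod_def by (intro Linf_diff Linf_add Linf_mult Linf_avg)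

lemma avg_prod_commute: "avg_prod k f = avg_prod f k"
  by (auto simp: avg_prod_def fun_eq_iff algebra_simps)

lemma avg_prod_linear:
  "f \<in> Linf \<Longrightarrow> g \<in> Linf \<Longrightarrow>
    avg_prod k (\<lambda>x. a * f x + b * g x) = (\<lambda>x. a * avg_prod k f x + b * avg_prod k g x)"
  by (auto simp: avg_prod_def avg_linear fun_eq_iff algebra_simps)

lemma exp_integral_avg_prod:
  assumes k: "k \<in> Linf" and f: "f \<in> Linf" and x: "0 \<le> x"
  shows "exp_integral (avg_prod k f) x = exp (- x) * exp_integral k x * exp_integral f x"
proof -
  define P where "P t = exp_integral k t * exp_integral f t" for t
  define p where "p t = exp_integral k t * (f t * exp t) + k t * exp t * exp_integral f t" for t
  note rule1 = integral_Icc_product_rule[OF integrable_exp_integral[OF k] integrable_exp_integral[OF f],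
      folded exp_integral_def, folded p_def P_def]
  have rule2: "(\<integral>t. indicator {0..x} t * (P t * - exp (- t) + p t * (exp (- t) - 1)) \<partial>lebesgue)
      = P x * (exp (- x) - 1)"
    and int2: "integrable lebesgue (\<lambda>t. indicator {0..x} t * (P t * - exp (- t) + p t * (exp (- t) - 1)))"
  proof -
    have "integrable lebesgue (\<lambda>s. indicator {0..x} s * - exp (- s))"
      by (rule integrable_lebesgue_Icc_continuous) (intro continuous_intros)
    note rule = integral_Icc_product_rule[OF rule1(1) this, unfolded rule1(2)]
    have W: "(\<integral>s. indicator {0..t} s * - exp (- s) \<partial>lebesgue) = exp (- t) - 1" if "0 \<le> t" for t :: real
      using integral_Icc_exp_minus[OF that] by simp
    have "(\<lambda>t. indicator {0..x} t * (P t * - exp (- t) + p t * (\<integral>s. indicator {0..t} s * - exp (- s) \<partial>lebesgue)))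
        = (\<lambda>t. indicator {0..x} t * (P t * - exp (- t) + p t * (exp (- t) - 1)))"
    proof
      fix t
      show "indicator {0..x} t * (P t * - exp (- t) + p t * (\<integral>s. indicator {0..t} s * - exp (- s) \<partial>lebesgue))
          = indicator {0..x} t * (P t * - exp (- t) + p t * (exp (- t) - 1))"
        by (cases "t \<in> {0..x}") (subst W, auto)
    qed
    from rule[unfolded this W[OF x]]
    show "(\<integral>t. indicator {0..x} t * (P t * - exp (- t) + p t * (exp (- t) - 1)) \<partial>lebesgue)
        = P x * (exp (- x) - 1)"
      and "integrable lebesgue (\<lambda>t. indicator {0..x} t * (P t * - exp (- t) + p t * (exp (- t) - 1)))"
      by simp_all
  qed
  have "indicator {0..x} t * (P t * - exp (- t) + p t * (exp (- t) - 1)) + indicator {0..x} t * p t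
      = indicator {0..x} t * (avg_prod k f t * exp t)" for t
    by (simp add: avg_prod_def avg_eq_exp_integral P_def p_def algebra_simps mult_exp_exp)
  then have "exp_integral (avg_prod k f) x
      = (\<integral>t. indicator {0..x} t * (P t * - exp (- t) + p t * (exp (- t) - 1)) + indicator {0..x} t * p t \<partial>lebesgue)"
    by (simp add: exp_integral_def)
  also have "\<dots> = (\<integral>t. indicator {0..x} t * (P t * - exp (- t) + p t * (exp (- t) - 1)) \<partial>lebesgue)
      + (\<integral>t. indicator {0..x} t * p t \<partial>lebesgue)"
    by (rule Bochner_Integration.integral_add[OF int2 rule1(1)])
  also have "\<dots> = P x * exp (- x)"
    unfolding rule2 rule1(2) by (simp add: algebra_simps)
  finally show ?thesis by (simp add: P_def)
qed

lemma avg_avg_prod: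
  "k \<in> Linf \<Longrightarrow> f \<in> Linf \<Longrightarrow> 0 \<le> x \<Longrightarrow> avg (avg_prod k f) x = avg k x * avg f x"
  by (simp add: avg_eq_exp_integral exp_integral_avg_prod)


section \<open>Means dominated by the upper exponential average\<close>

lemma mean_linear:
  "is_mean \<phi> \<Longrightarrow> f \<in> Linf \<Longrightarrow> g \<in> Linf \<Longrightarrow> \<phi> (\<lambda>x. a * f x + b * g x) = a * \<phi> f + b * \<phi> g"
  by (simp add: is_mean_def)

lemma mean_scale: "is_mean \<phi> \<Longrightarrow> f \<in> Linf \<Longrightarrow> \<phi> (\<lambda>x. a * f x) = a * \<phi> f"
  using mean_linear[of \<phi> f f a 0] by simp

lemma mean_add: "is_mean \<phi> \<Longrightarrow> f \<in> Linf \<Longrightarrow> g \<in> Linf \<Longrightarrow> \<phi> (\<lambda>x. f x + g x) = \<phi> f + \<phi> g"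
  using mean_linear[of \<phi> f g 1 1] by simp

lemma mean_diff: "is_mean \<phi> \<Longrightarrow> f \<in> Linf \<Longrightarrow> g \<in> Linf \<Longrightarrow> \<phi> (\<lambda>x. f x - g x) = \<phi> f - \<phi> g"
  using mean_linear[of \<phi> f g 1 "-1"] by simp

lemma mean_const: "is_mean \<phi> \<Longrightarrow> \<phi> (\<lambda>_. c) = c"
  using mean_scale[of \<phi> "\<lambda>_. 1" c] by (simp add: is_mean_def)

lemma mean_outside_Linf: "is_mean \<phi> \<Longrightarrow> f \<notin> Linf \<Longrightarrow> \<phi> f = 0"
  by (simp add: is_mean_def)

lemma R_means_is_mean: "\<phi> \<in> R_means \<Longrightarrow> is_mean \<phi>"
  by (simp add: R_means_def)

lemma ereal_le_Limsup_real:
  fixes g :: "'a \<Rightarrow> real"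
  assumes "\<And>c. eventually (\<lambda>x. g x < c) F \<Longrightarrow> v \<le> c"
  shows "ereal v \<le> Limsup F (\<lambda>x. ereal (g x))"
proof (rule ccontr)
  assume "\<not> ?thesis"
  then obtain c where c: "Limsup F (\<lambda>x. ereal (g x)) < ereal c" "ereal c < ereal v"
    using ereal_dense2 by (metis not_le)
  have "eventually (\<lambda>x. g x < c) F"
    using Limsup_lessD[OF c(1)] by simp
  then show False using assms c(2) by force
qed

lemma R_meansI:
  assumes "is_mean \<phi>"
    and "\<And>f c. f \<in> Linf \<Longrightarrow> eventually (\<lambda>x. avg f x < c) at_top \<Longrightarrow> \<phi> f \<le> c"
  shows "\<phi> \<in> R_means"
  using assms by (auto simp: R_means_def intro!: ereal_le_Limsup_real)

lemma R_means_le: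
  assumes "\<phi> \<in> R_means" "f \<in> Linf" "\<And>e. e > 0 \<Longrightarrow> eventually (\<lambda>x. avg f x \<le> c + e) at_top"
  shows "\<phi> f \<le> c"
proof (rule field_le_epsilon)
  fix e :: real assume e: "e > 0"
  have "ereal (\<phi> f) \<le> Limsup at_top (\<lambda>x. ereal (avg f x))"
    using assms(1,2) by (simp add: R_means_def)
  also have "\<dots> \<le> ereal (c + e)"
    using assms(3)[OF e] by (intro Limsup_bounded) (auto elim!: eventually_mono)
  finally show "\<phi> f \<le> c + e" by simp
qed

lemma R_means_ge:
  assumes \<phi>: "\<phi> \<in> R_means" and f: "f \<in> Linf"
    and ev: "\<And>e. e > 0 \<Longrightarrow> eventually (\<lambda>x. avg f x \<ge> c - e) at_top"
  shows "\<phi> f \<ge> c"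
proof -
  have "\<phi> (\<lambda>x. - f x) \<le> - c"
  proof (rule R_means_le[OF \<phi> Linf_minus[OF f]])
    fix e :: real assume "e > 0"
    from ev[OF this] show "eventually (\<lambda>x. avg (\<lambda>x. - f x) x \<le> - c + e) at_top"
      by eventually_elim (simp add: avg_minus[OF f])
  qed
  then show ?thesis
    using mean_scale[OF R_means_is_mean[OF \<phi>] f, of "-1"] by simp
qed

lemma R_means_eq_of_tendsto:
  assumes "\<phi> \<in> R_means" "f \<in> Linf" "(avg f \<longlongrightarrow> c) at_top"
  shows "\<phi> f = c"
proof -
  have ev: "eventually (\<lambda>x. \<bar>avg f x - c\<bar> < e) at_top" if "e > 0" for e
    using tendstoD[OF assms(3) that] by (simp add: dist_real_def)
  show ?thesis
  proof (rule antisym)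
    show "\<phi> f \<le> c"
      by (rule R_means_le[OF assms(1,2)], rule eventually_mono[OF ev]) auto
    show "\<phi> f \<ge> c"
      by (rule R_means_ge[OF assms(1,2)], rule eventually_mono[OF ev]) auto
  qed
qed

lemma tendsto_exp_minus_at_top: "((\<lambda>x::real. c * exp (- x)) \<longlongrightarrow> 0) at_top"
  using tendsto_mult_right_zero[OF tendsto_inverse_0_at_top[OF exp_at_top], of c]
  by (simp add: exp_minus)

lemma avg_const_tendsto: "(avg (\<lambda>_. c) \<longlongrightarrow> c) at_top"
proof -
  have "((\<lambda>x. c - c * exp (- x)) \<longlongrightarrow> c - 0) at_top"
    by (intro tendsto_diff tendsto_const tendsto_exp_minus_at_top)
  moreover have "eventually (\<lambda>x. c - c * exp (- x) = avg (\<lambda>_. c) x) at_top"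
    using eventually_ge_at_top[of 0] by eventually_elim (simp add: avg_const algebra_simps)
  ultimately show ?thesis by (simp add: tendsto_cong)
qed


lemma R_means_sq_le:
  assumes \<psi>: "\<psi> \<in> R_means" and h: "h \<in> Linf"
  shows "(\<psi> h)\<^sup>2 \<le> \<psi> (avg_prod h h)"
proof -
  define m where "m = \<psi> h"
  define H where "H = (\<lambda>x. avg_prod h h x + (- 2 * m) * h x + m\<^sup>2)"
  have hh: "avg_prod h h \<in> Linf" by (rule Linf_avg_prod[OF h h])
  have H: "H \<in> Linf"
    using Linf_add[OF Linf_linear[OF hh h, of 1 "- 2 * m"] Linf_const[of "m\<^sup>2"]] by (simp add: H_def)
  have "\<psi> H = \<psi> (avg_prod h h) - m\<^sup>2"
    using mean_add[OF R_means_is_mean[OF \<psi>] Linf_linear[OF hh h, of 1 "- 2 * m"] Linf_const]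
      mean_linear[OF R_means_is_mean[OF \<psi>] hh h, of 1 "- 2 * m"] mean_const[OF R_means_is_mean[OF \<psi>]]
    by (simp add: H_def m_def power2_eq_square)
  moreover have "\<psi> H \<ge> 0"
  proof (rule R_means_ge[OF \<psi> H])
    fix e :: real assume e: "e > 0"
    have avg_H: "avg H x = (avg h x - m)\<^sup>2 - m\<^sup>2 * exp (- x)" if "0 \<le> x" for x
    proof -
      have "avg H x = avg (\<lambda>x. 1 * avg_prod h h x + (- 2 * m) * h x) x + avg (\<lambda>_. m\<^sup>2) x"
        using avg_add[OF Linf_linear[OF hh h, of 1 "- 2 * m"] Linf_const, of "m\<^sup>2" x] by (simp add: H_def)
      also have "\<dots> = avg h x * avg h x - 2 * m * avg h x + m\<^sup>2 * (1 - exp (- x))"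
        using avg_linear[OF hh h, of 1 "- 2 * m" x] avg_avg_prod[OF h h that] avg_const[OF that] by simp
      finally show ?thesis by (simp add: power2_eq_square algebra_simps)
    qed
    have "eventually (\<lambda>x. m\<^sup>2 * exp (- x) < e) at_top"
      using order_tendstoD(2)[OF tendsto_exp_minus_at_top e] .
    then show "eventually (\<lambda>x. avg H x \<ge> 0 - e) at_top"
      using eventually_ge_at_top[of 0]
    proof eventually_elim
      case (elim x)
      have "(avg h x - m)\<^sup>2 \<ge> 0" by simp
      then show ?case using elim avg_H[OF elim(2)] by linarith
    qed
  qed
  ultimately show ?thesis by (simp add: m_def)
qed

section \<open>Ultrafilters\<close>

lemma maximal_proper_subfilter_exists:
  fixes F :: "'a filter"
  assumes "F \<noteq> bot"
  obtains m where "m \<le> F" "m \<noteq> bot" "\<And>a. a \<le> F \<Longrightarrow> a \<noteq> bot \<Longrightarrow> a \<le> m \<Longrightarrow> a = m"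
proof -
  define A where "A = {G. G \<le> F \<and> G \<noteq> bot}"
  have "partial_order_on A (relation_of (\<lambda>a b. b \<le> a) A)"
    by (rule partial_order_on_relation_ofI) auto
  then have "\<exists>m\<in>A. \<forall>a\<in>A. a \<le> m \<longrightarrow> a = m"
  proof (rule predicate_Zorn)
    fix C assume C: "C \<in> Chains (relation_of (\<lambda>a b. b \<le> a) A)"
    then have CA: "C \<subseteq> A" and total: "\<And>a b. a \<in> C \<Longrightarrow> b \<in> C \<Longrightarrow> b \<le> a \<or> a \<le> b"
      unfolding Chains_def relation_of_def by auto
    show "\<exists>u\<in>A. \<forall>a\<in>C. u \<le> a"
    proof (cases "C = {}")
      case False
      have "eventually P (Inf C) \<longleftrightarrow> (\<exists>b\<in>C. eventually P b)" for P
      proof (rule eventually_Inf_base[OF False])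
        fix a b assume "a \<in> C" "b \<in> C"
        then show "\<exists>x\<in>C. x \<le> inf a b"
          using total[of a b] by (metis inf.absorb_iff2 inf.orderE inf_le1 inf_le2 order_refl)
      qed
      then have "Inf C \<noteq> bot"
        using CA by (auto simp: A_def trivial_limit_def)
      moreover have "Inf C \<le> F"
        using False CA by (auto simp: A_def intro: order_trans Inf_lower)
      ultimately show ?thesis by (auto simp: A_def intro: Inf_lower)
    qed (use assms in \<open>auto simp: A_def\<close>)
  qed
  then show ?thesis using that by (auto simp: A_def)
qed

lemma ultrafilter_exists:
  fixes F :: "'a filter"
  assumes "F \<noteq> bot"
  obtains U where "U \<le> F" "ultrafilter U"
proof -
  obtain m where m: "m \<le> F" "m \<noteq> bot" and max: "\<And>a. a \<le> F \<Longrightarrow> a \<noteq> bot \<Longrightarrow> a \<le> m \<Longrightarrow> a = m"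
    using maximal_proper_subfilter_exists[OF assms] by blast
  have "eventually P m" if "\<not> eventually (\<lambda>x. \<not> P x) m" for P
  proof -
    have "inf m (principal {x. P x}) \<noteq> bot"
      using that by (auto simp: trivial_limit_def eventually_inf_principal)
    then have "inf m (principal {x. P x}) = m"
      using m(1) by (intro max) (simp_all add: le_infI1)
    moreover have "eventually P (inf m (principal {x. P x}))"
      by (simp add: eventually_inf_principal)
    ultimately show ?thesis by simp
  qed
  then have "ultrafilter m" using m(2) by (auto simp: ultrafilter_def)
  with m(1) show ?thesis by (rule that)
qed

lemma ultrafilter_filtermap: "ultrafilter F \<Longrightarrow> ultrafilter (filtermap h F)"
  by (auto simp: ultrafilter_def eventually_filtermap filtermap_bot_iff)

lemma ultrafilter_bounded_tendsto:
  fixes g :: "'a \<Rightarrow> real"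
  assumes U: "ultrafilter U" and bound: "eventually (\<lambda>x. \<bar>g x\<bar> \<le> B) U"
  obtains L where "(g \<longlongrightarrow> L) U"
proof -
  define G where "G = filtermap g U"
  have G: "ultrafilter G" unfolding G_def by (rule ultrafilter_filtermap[OF U])
  have "eventually (\<lambda>y. y \<in> {-B..B}) G"
    using bound by (auto simp: G_def eventually_filtermap abs_le_iff elim!: eventually_mono)
  then obtain L where L: "inf (nhds L) G \<noteq> bot"
    using G compact_filter[THEN iffD1, OF compact_Icc[of "-B" B], rule_format, of G]
    by (auto simp: ultrafilter_def)
  have "G \<le> nhds L"
  proof (rule filter_leI)
    fix P assume P: "eventually P (nhds L)"
    show "eventually P G"
    proof (rule ccontr)
      assume "\<not> eventually P G"
      then have "eventually (\<lambda>y. \<not> P y) G" using G by (auto simp: ultrafilter_def)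
      then have "eventually (\<lambda>y. False) (inf (nhds L) G)"
        using P unfolding eventually_inf by blast
      then show False using L by (simp add: eventually_False)
    qed
  qed
  then show ?thesis using that by (auto simp: G_def filterlim_def)
qed

lemma ultrafilter_through_directed:
  fixes B :: "'i \<Rightarrow> 'a set"
  assumes "I \<noteq> {}" and nonempty: "\<And>i. i \<in> I \<Longrightarrow> B i \<noteq> {}"
    and directed: "\<And>i j. i \<in> I \<Longrightarrow> j \<in> I \<Longrightarrow> \<exists>l\<in>I. B l \<subseteq> B i \<inter> B j"
  obtains U where "ultrafilter U" "\<And>i. i \<in> I \<Longrightarrow> eventually (\<lambda>x. x \<in> B i) U"
proof -
  define F where "F = (INF i\<in>I. principal (B i))"
  have ev: "eventually P F \<longleftrightarrow> (\<exists>i\<in>I. eventually P (principal (B i)))" for P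
    unfolding F_def
  proof (rule eventually_INF_base[OF assms(1)])
    fix i j assume "i \<in> I" "j \<in> I"
    then show "\<exists>l\<in>I. principal (B l) \<le> inf (principal (B i)) (principal (B j))"
      using directed by auto
  qed
  have "F \<noteq> bot"
    using nonempty ev[of "\<lambda>_. False"] by (auto simp: trivial_limit_def eventually_principal)
  then obtain U where UF: "U \<le> F" and U: "ultrafilter U" by (rule ultrafilter_exists)
  from U show ?thesis
  proof (rule that)
    fix i assume "i \<in> I"
    then have "eventually (\<lambda>x. x \<in> B i) F" using ev by (auto simp: eventually_principal)
    then show "eventually (\<lambda>x. x \<in> B i) U" by (rule filter_leD[OF UF])
  qed
qed

section \<open>The means chi\<close>

lemma omega_filter_le_at_top:
  assumes "free_ultrafilter_nat \<eta>"
  shows "omega_filter \<eta> t \<le> at_top"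
proof -
  have "filterlim (\<lambda>n. real n + t) at_top sequentially"
    using filterlim_tendsto_add_at_top[OF tendsto_const filterlim_real_sequentially] by (simp add: add.commute)
  then have "filterlim (\<lambda>n. real n + t) at_top \<eta>"
    using assms by (auto simp: free_ultrafilter_nat_def cofinite_eq_sequentially intro: filterlim_mono)
  then show ?thesis by (simp add: omega_filter_def filterlim_def)
qed

lemma ultrafilter_omega_filter: "free_ultrafilter_nat \<eta> \<Longrightarrow> ultrafilter (omega_filter \<eta> t)"
  by (auto simp: free_ultrafilter_nat_def omega_filter_def intro: ultrafilter_filtermap)

lemma omega_filter_neq_bot: "free_ultrafilter_nat \<eta> \<Longrightarrow> omega_filter \<eta> t \<noteq> bot"
  using ultrafilter_omega_filter by (auto simp: ultrafilter_def)

lemma chi_tendsto: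
  assumes \<eta>: "free_ultrafilter_nat \<eta>" and f: "f \<in> Linf"
  shows "(avg f \<longlongrightarrow> chi \<eta> t f) (omega_filter \<eta> t)"
proof -
  obtain B where "\<And>x. x \<ge> 0 \<Longrightarrow> \<bar>avg f x\<bar> \<le> B" using avg_bounded[OF f] by blast
  then have "eventually (\<lambda>x. \<bar>avg f x\<bar> \<le> B) (omega_filter \<eta> t)"
    using filter_leD[OF omega_filter_le_at_top[OF \<eta>, of t] eventually_ge_at_top[of 0]]
    by (auto elim: eventually_mono)
  then obtain L where L: "(avg f \<longlongrightarrow> L) (omega_filter \<eta> t)"
    using ultrafilter_bounded_tendsto[OF ultrafilter_omega_filter[OF \<eta>]] by blast
  then have "chi \<eta> t f = L"
    using f tendsto_Lim[OF omega_filter_neq_bot[OF \<eta>]] by (simp add: chi_def)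
  then show ?thesis using L by simp
qed

lemma chi_in_R_means:
  assumes \<eta>: "free_ultrafilter_nat \<eta>"
  shows "chi \<eta> t \<in> R_means"
proof (rule R_meansI)
  let ?\<omega> = "omega_filter \<eta> t"
  note lim = chi_tendsto[OF \<eta>, where t=t] and nontriv = omega_filter_neq_bot[OF \<eta>]
  have "chi \<eta> t (\<lambda>x. a * f x + b * g x) = a * chi \<eta> t f + b * chi \<eta> t g"
    if f: "f \<in> Linf" and g: "g \<in> Linf" for f g a b
  proof -
    have "(avg (\<lambda>x. a * f x + b * g x) \<longlongrightarrow> a * chi \<eta> t f + b * chi \<eta> t g) ?\<omega>"
    proof -
      have "avg (\<lambda>x. a * f x + b * g x) = (\<lambda>x. a * avg f x + b * avg g x)"
        by (simp add: fun_eq_iff avg_linear[OF f g])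
      then show ?thesis using lim[OF f] lim[OF g] by (auto intro!: tendsto_intros)
    qed
    then show ?thesis using tendsto_unique[OF nontriv lim[OF Linf_linear[OF f g]]] by blast
  qed
  moreover have "chi \<eta> t f \<ge> 0" if "f \<in> Linf" "AE x in lebesgue. x \<ge> 0 \<longrightarrow> f x \<ge> 0" for f
    using tendsto_lowerbound[OF lim[OF that(1)] _ nontriv] avg_nonneg[OF that(2)] by auto
  moreover have "chi \<eta> t (\<lambda>_. 1) = 1"
    using tendsto_unique[OF nontriv lim[OF Linf_const]
        tendsto_mono[OF omega_filter_le_at_top[OF \<eta>] avg_const_tendsto]] .
  ultimately show "is_mean (chi \<eta> t)"
    unfolding is_mean_def by (auto simp: chi_def)
  fix f c assume f: "f \<in> Linf" and "eventually (\<lambda>x. avg f x < c) at_top"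
  then have "eventually (\<lambda>x. avg f x \<le> c) ?\<omega>"
    by (intro filter_leD[OF omega_filter_le_at_top[OF \<eta>]]) (auto elim: eventually_mono)
  then show "chi \<eta> t f \<le> c" using tendsto_upperbound[OF lim[OF f] _ nontriv] by auto
qed

lemma chi_avg_prod:
  assumes \<eta>: "free_ultrafilter_nat \<eta>" and k: "k \<in> Linf" and f: "f \<in> Linf"
  shows "chi \<eta> t (avg_prod k f) = chi \<eta> t k * chi \<eta> t f"
proof -
  have "eventually (\<lambda>x. avg k x * avg f x = avg (avg_prod k f) x) (omega_filter \<eta> t)"
    using filter_leD[OF omega_filter_le_at_top[OF \<eta>, of t] eventually_ge_at_top[of 0]]
    by eventually_elim (simp add: avg_avg_prod[OF k f])
  then have "(avg (avg_prod k f) \<longlongrightarrow> chi \<eta> t k * chi \<eta> t f) (omega_filter \<eta> t)"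
    using tendsto_mult[OF chi_tendsto[OF \<eta> k, of t] chi_tendsto[OF \<eta> f, of t]] by (rule tendsto_cong[THEN iffD1])
  then show ?thesis
    using tendsto_unique[OF omega_filter_neq_bot[OF \<eta>] chi_tendsto[OF \<eta> Linf_avg_prod[OF k f]]] by blast
qed


lemma chi_convex_decomposition:
  assumes \<eta>: "free_ultrafilter_nat \<eta>" and \<psi>1: "\<psi>1 \<in> R_means" and \<psi>2: "\<psi>2 \<in> R_means"
    and u: "0 < u" "u < 1" and decomp: "chi \<eta> t = (\<lambda>f. u * \<psi>1 f + (1 - u) * \<psi>2 f)"
  shows "\<psi>1 = chi \<eta> t"
proof
  fix f
  have chi_mean: "is_mean (chi \<eta> t)" by (rule R_means_is_mean[OF chi_in_R_means[OF \<eta>]])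
  show "\<psi>1 f = chi \<eta> t f"
  proof (cases "f \<in> Linf")
    case False
    then show ?thesis
      using mean_outside_Linf[OF R_means_is_mean[OF \<psi>1]] mean_outside_Linf[OF chi_mean] by simp
  next
    case f: True
    define h where "h = (\<lambda>x. f x - chi \<eta> t f)"
    have h: "h \<in> Linf" unfolding h_def by (intro Linf_diff f Linf_const)
    have mean_h: "\<psi> h = \<psi> f - chi \<eta> t f" if "is_mean \<psi>" for \<psi>
      using mean_diff[OF that f Linf_const] mean_const[OF that] by (simp add: h_def)
    have "chi \<eta> t (avg_prod h h) = 0"
      using chi_avg_prod[OF \<eta> h h] mean_h[OF chi_mean] by simp
    then have sum: "u * \<psi>1 (avg_prod h h) + (1 - u) * \<psi>2 (avg_prod h h) = 0"
      using fun_cong[OF decomp, of "avg_prod h h"] by simp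
    have sq: "(\<psi>1 h)\<^sup>2 \<le> \<psi>1 (avg_prod h h)" "(\<psi>2 h)\<^sup>2 \<le> \<psi>2 (avg_prod h h)"
      using R_means_sq_le[OF \<psi>1 h] R_means_sq_le[OF \<psi>2 h] .
    then have "u * \<psi>1 (avg_prod h h) \<ge> 0" "(1 - u) * \<psi>2 (avg_prod h h) \<ge> 0"
      using u by (simp_all add: order_trans[OF zero_le_power2])
    then have "(\<psi>1 h)\<^sup>2 \<le> 0"
      using sum sq(1) u by (simp add: add_nonneg_eq_0_iff)
    then show ?thesis using mean_h[OF R_means_is_mean[OF \<psi>1]] by simp
  qed
qed

lemma chi_extreme_point:
  assumes \<eta>: "free_ultrafilter_nat \<eta>"
  shows "chi \<eta> t \<in> extreme_points R_means"
  unfolding extreme_points_def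
proof (intro CollectI conjI notI)
  show "chi \<eta> t \<in> R_means" by (rule chi_in_R_means[OF \<eta>])
  assume "\<exists>\<psi>1\<in>R_means. \<exists>\<psi>2\<in>R_means. \<exists>u::real. 0 < u \<and> u < 1 \<and> \<psi>1 \<noteq> \<psi>2 \<and>
      chi \<eta> t = (\<lambda>f. u * \<psi>1 f + (1 - u) * \<psi>2 f)"
  then obtain \<psi>1 \<psi>2 u where \<psi>: "\<psi>1 \<in> R_means" "\<psi>2 \<in> R_means" and u: "0 < u" "u < 1"
    and "\<psi>1 \<noteq> \<psi>2" and decomp: "chi \<eta> t = (\<lambda>f. u * \<psi>1 f + (1 - u) * \<psi>2 f)"
    by blast
  have "\<psi>1 = chi \<eta> t" by (rule chi_convex_decomposition[OF \<eta> \<psi> u decomp])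
  moreover have "\<psi>2 = chi \<eta> t"
    using decomp u by (intro chi_convex_decomposition[OF \<eta> \<psi>(2,1), of "1 - u"]) (auto simp: add.commute)
  ultimately show False using \<open>\<psi>1 \<noteq> \<psi>2\<close> by simp
qed

section \<open>Extreme points are multiplicative\<close>

lemma R_means_avg_prod_one:
  assumes \<phi>: "\<phi> \<in> R_means" and f: "f \<in> Linf"
  shows "\<phi> (avg_prod (\<lambda>_. 1) f) = \<phi> f"
proof -
  have one_f: "avg_prod (\<lambda>_. 1) f \<in> Linf" by (rule Linf_avg_prod[OF Linf_const f])
  obtain B where B: "\<And>x. x \<ge> 0 \<Longrightarrow> \<bar>avg f x\<bar> \<le> B" using avg_bounded[OF f] by blast
  have "((\<lambda>x. - (exp (- x) * avg f x)) \<longlongrightarrow> 0) at_top"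
  proof (rule tendsto_minus_cancel, simp, rule Lim_null_comparison)
    show "eventually (\<lambda>x. norm (exp (- x) * avg f x) \<le> B * exp (- x)) at_top"
      using eventually_ge_at_top[of 0] by eventually_elim (auto simp: abs_mult B mult.commute)
  qed (rule tendsto_exp_minus_at_top)
  moreover have "eventually (\<lambda>x. - (exp (- x) * avg f x) = avg (\<lambda>x. avg_prod (\<lambda>_. 1) f x - f x) x) at_top"
    using eventually_ge_at_top[of 0]
    by eventually_elim (simp add: avg_diff[OF one_f f] avg_avg_prod[OF Linf_const f] avg_const algebra_simps)
  ultimately have "\<phi> (\<lambda>x. avg_prod (\<lambda>_. 1) f x - f x) = 0"
    by (intro R_means_eq_of_tendsto[OF \<phi> Linf_diff[OF one_f f]]) (rule tendsto_cong[THEN iffD1, rotated])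
  then show ?thesis using mean_diff[OF R_means_is_mean[OF \<phi>] one_f f] by simp
qed

text \<open>An operator \<open>S\<close> that multiplies averages by a weight in \<open>[0, 1]\<close> splits \<open>\<phi>\<close> into
  \<open>\<phi> \<circ> S\<close> and \<open>\<phi> - \<phi> \<circ> S\<close>; both parts, normalised, lie in \<open>R_means\<close> again.\<close>

locale avg_multiplier =
  fixes \<phi> :: "(real \<Rightarrow> real) \<Rightarrow> real" and S :: "(real \<Rightarrow> real) \<Rightarrow> real \<Rightarrow> real" and w :: "real \<Rightarrow> real"
  assumes R_mean: "\<phi> \<in> R_means"
    and Linf_S: "\<And>f. f \<in> Linf \<Longrightarrow> S f \<in> Linf"
    and S_linear: "\<And>f g a b. f \<in> Linf \<Longrightarrow> g \<in> Linf \<Longrightarrow> S (\<lambda>x. a * f x + b * g x) = (\<lambda>x. a * S f x + b * S g x)"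
    and weight: "\<And>x. 0 \<le> x \<Longrightarrow> 0 \<le> w x \<and> w x \<le> 1"
    and avg_S: "\<And>f x. f \<in> Linf \<Longrightarrow> 0 \<le> x \<Longrightarrow> avg (S f) x = w x * avg f x"
begin

lemma mean_S_linear:
  assumes "f \<in> Linf" "g \<in> Linf"
  shows "\<phi> (S (\<lambda>x. a * f x + b * g x)) = a * \<phi> (S f) + b * \<phi> (S g)"
  unfolding S_linear[OF assms]
  by (rule mean_linear[OF R_means_is_mean[OF R_mean] Linf_S[OF assms(1)] Linf_S[OF assms(2)]])

lemma mean_S_nonneg:
  assumes f: "f \<in> Linf" and "AE x in lebesgue. x \<ge> 0 \<longrightarrow> f x \<ge> 0"
  shows "\<phi> (S f) \<ge> 0"
proof (rule R_means_ge[OF R_mean Linf_S[OF f]])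
  fix e :: real assume "e > 0"
  show "eventually (\<lambda>x. avg (S f) x \<ge> 0 - e) at_top"
    using eventually_ge_at_top[of 0]
  proof eventually_elim
    case (elim x)
    have "0 \<le> w x * avg f x"
      using weight[OF elim] avg_nonneg[OF assms(2), of x] by simp
    then show ?case using avg_S[OF f elim] \<open>e > 0\<close> by simp
  qed
qed

lemma mean_S_eq_0:
  assumes "\<phi> (S (\<lambda>_. 1)) = 0" and f: "f \<in> Linf"
  shows "\<phi> (S f) = 0"
proof -
  obtain B where "AE x in lebesgue. x \<ge> 0 \<longrightarrow> \<bar>f x\<bar> \<le> B" using Linf_bound[OF f] by blast
  then have nonneg: "AE x in lebesgue. x \<ge> 0 \<longrightarrow> 0 \<le> B * 1 + 1 * f x"
    "AE x in lebesgue. x \<ge> 0 \<longrightarrow> 0 \<le> B * 1 + (-1) * f x"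
    by (eventually_elim, linarith)+
  have "\<phi> (S (\<lambda>x. B * 1 + 1 * f x)) \<ge> 0" "\<phi> (S (\<lambda>x. B * 1 + (-1) * f x)) \<ge> 0"
    using mean_S_nonneg[OF Linf_linear[OF Linf_const[of 1] f] nonneg(1)]
      mean_S_nonneg[OF Linf_linear[OF Linf_const[of 1] f] nonneg(2)] by simp_all
  then show ?thesis
    using mean_S_linear[OF Linf_const[of 1] f, of B 1] mean_S_linear[OF Linf_const[of 1] f, of B "-1"]
      assms(1) by simp
qed

definition normalized :: "(real \<Rightarrow> real) \<Rightarrow> real" where
  "normalized f = (if f \<in> Linf then \<phi> (S f) / \<phi> (S (\<lambda>_. 1)) else 0)"

lemma normalized_R_means:
  assumes pos: "\<phi> (S (\<lambda>_. 1)) > 0"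
  shows "normalized \<in> R_means"
proof (rule R_meansI)
  have "normalized (\<lambda>x. a * f x + b * g x) = a * normalized f + b * normalized g"
    if "f \<in> Linf" "g \<in> Linf" for f g a b
    using that by (simp add: normalized_def Linf_linear mean_S_linear add_divide_distrib)
  moreover have "normalized f \<ge> 0" if "f \<in> Linf" "AE x in lebesgue. x \<ge> 0 \<longrightarrow> f x \<ge> 0" for f
    using mean_S_nonneg[OF that] pos that(1) by (simp add: normalized_def)
  ultimately show "is_mean normalized"
    unfolding is_mean_def using pos by (simp add: normalized_def)
  fix f c assume f: "f \<in> Linf" and ev: "eventually (\<lambda>x. avg f x < c) at_top"
  have "\<phi> (S (\<lambda>x. 1 * f x + (- c) * 1)) \<le> 0"
  proof (rule R_means_le[OF R_mean Linf_S[OF Linf_linear[OF f Linf_const]]])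
    fix e :: real assume "e > 0"
    then have "eventually (\<lambda>x. \<bar>c\<bar> * exp (- x) < e) at_top"
      using order_tendstoD(2)[OF tendsto_exp_minus_at_top] by blast
    then show "eventually (\<lambda>x. avg (S (\<lambda>x. 1 * f x + (- c) * 1)) x \<le> 0 + e) at_top"
      using ev eventually_ge_at_top[of 0]
    proof eventually_elim
      case (elim x)
      have "avg (S (\<lambda>x. 1 * f x + (- c) * 1)) x = w x * (avg f x - c * (1 - exp (- x)))"
        using avg_S[OF Linf_linear[OF f Linf_const[of 1], of 1 "- c"] elim(3)]
          avg_linear[OF f Linf_const[of 1], of 1 "- c" x] avg_const[OF elim(3), of 1] by simp
      also have "\<dots> = w x * (avg f x - c) + w x * (c * exp (- x))"
        by (simp add: algebra_simps)
      also have "\<dots> \<le> 0 + 1 * (\<bar>c\<bar> * exp (- x))"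
      proof (rule add_mono)
        show "w x * (avg f x - c) \<le> 0"
          using weight[OF elim(3)] elim(2) by (simp add: mult_nonneg_nonpos)
        have "w x * (c * exp (- x)) \<le> w x * (\<bar>c\<bar> * exp (- x))"
          using weight[OF elim(3)] by (intro mult_left_mono) auto
        also have "\<dots> \<le> 1 * (\<bar>c\<bar> * exp (- x))"
          using weight[OF elim(3)] by (intro mult_right_mono) auto
        finally show "w x * (c * exp (- x)) \<le> 1 * (\<bar>c\<bar> * exp (- x))" .
      qed
      finally show ?case using elim(1) by simp
    qed
  qed
  then have "\<phi> (S f) \<le> c * \<phi> (S (\<lambda>_. 1))"
    using mean_S_linear[OF f Linf_const[of 1], of 1 "- c"] by simp
  then show "normalized f \<le> c"
    using pos f by (simp add: normalized_def pos_divide_le_eq)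
qed

end


lemma extreme_point_avg_prod_of_unit:
  assumes ext: "\<phi> \<in> extreme_points R_means" and k: "k \<in> Linf"
    and k_unit: "\<And>x. 0 \<le> x \<Longrightarrow> 0 \<le> avg k x \<and> avg k x \<le> 1" and f: "f \<in> Linf"
  shows "\<phi> (avg_prod k f) = \<phi> (avg_prod k (\<lambda>_. 1)) * \<phi> f"
proof -
  have \<phi>: "\<phi> \<in> R_means" using ext by (simp add: extreme_points_def)
  note mean = R_means_is_mean[OF \<phi>]
  interpret K: avg_multiplier \<phi> "avg_prod k" "avg k"
    by unfold_locales (auto simp: \<phi> Linf_avg_prod k avg_prod_linear k_unit avg_avg_prod)
  interpret K': avg_multiplier \<phi> "\<lambda>f x. f x - avg_prod k f x" "\<lambda>x. 1 - avg k x"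
    by unfold_locales (auto simp: \<phi> Linf_diff Linf_avg_prod k avg_prod_linear k_unit avg_diff avg_avg_prod
        fun_eq_iff algebra_simps)
  define m where "m = \<phi> (avg_prod k (\<lambda>_. 1))"
  have m': "\<phi> (\<lambda>x. 1 - avg_prod k (\<lambda>_. 1) x) = 1 - m"
    using mean_diff[OF mean Linf_const Linf_avg_prod[OF k Linf_const]] mean_const[OF mean]
    by (simp add: m_def)
  have split: "\<phi> g = \<phi> (avg_prod k g) + \<phi> (\<lambda>x. g x - avg_prod k g x)" if "g \<in> Linf" for g
    using mean_diff[OF mean that Linf_avg_prod[OF k that]] by simp
  consider "m = 0" | "m = 1" | "0 < m" "m < 1"
    using K.mean_S_nonneg[of "\<lambda>_. 1"] K'.mean_S_nonneg[of "\<lambda>_. 1"] m' by (force simp: m_def)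
  then show ?thesis
  proof cases
    case 1
    then show ?thesis using K.mean_S_eq_0[OF _ f] by (simp add: m_def)
  next
    case 2
    then show ?thesis using K'.mean_S_eq_0[OF _ f] m' split[OF f] by (simp add: m_def)
  next
    case 3
    have "\<phi> = (\<lambda>g. m * K.normalized g + (1 - m) * K'.normalized g)"
    proof
      fix g show "\<phi> g = m * K.normalized g + (1 - m) * K'.normalized g"
        using 3 m' split[of g] mean_outside_Linf[OF mean, of g]
        by (cases "g \<in> Linf") (simp_all add: K.normalized_def K'.normalized_def m_def)
    qed
    moreover have "K.normalized \<in> R_means" "K'.normalized \<in> R_means"
      using K.normalized_R_means K'.normalized_R_means 3 m' by (simp_all add: m_def)
    ultimately have "K.normalized = K'.normalized"
      using ext 3 unfolding extreme_points_def by blast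
    then have "K.normalized f = K'.normalized f" by simp
    then have "\<phi> (avg_prod k f) / m = \<phi> (\<lambda>x. f x - avg_prod k f x) / (1 - m)"
      using f m' by (simp add: K.normalized_def K'.normalized_def m_def)
    then show ?thesis using 3 split[OF f] by (simp add: field_simps m_def)
  qed
qed


lemma extreme_point_multiplicative:
  assumes ext: "\<phi> \<in> extreme_points R_means" and k: "k \<in> Linf" and f: "f \<in> Linf"
  shows "\<phi> (avg_prod k f) = \<phi> k * \<phi> f"
proof -
  have \<phi>: "\<phi> \<in> R_means" using ext by (simp add: extreme_points_def)
  note mean = R_means_is_mean[OF \<phi>]
  obtain B where "B \<ge> 0" "AE x in lebesgue. x \<ge> 0 \<longrightarrow> \<bar>k x\<bar> \<le> B" using Linf_bound[OF k] .
  define a where "a = 1 / (2 * (B + 1))"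
  have a: "a > 0" using \<open>B \<ge> 0\<close> by (simp add: a_def)
  define k' where "k' = (\<lambda>x. a * k x + 1 / 2 * 1)"
  have k': "k' \<in> Linf" unfolding k'_def by (rule Linf_linear[OF k Linf_const])
  have "0 \<le> avg k' x \<and> avg k' x \<le> 1" if x: "0 \<le> x" for x
  proof -
    have "\<bar>a * avg k x\<bar> \<le> a * (B * (1 - exp (- x)))"
      using abs_avg_le[OF k \<open>B \<ge> 0\<close> _ x] a \<open>AE x in lebesgue. x \<ge> 0 \<longrightarrow> \<bar>k x\<bar> \<le> B\<close>
      by (simp add: abs_mult)
    also have "\<dots> \<le> 1 / 2 - exp (- x) / 2"
      using \<open>B \<ge> 0\<close> x by (simp add: a_def field_simps)
    finally have bound: "\<bar>a * avg k x\<bar> \<le> 1 / 2 - exp (- x) / 2" .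
    have "- (a * avg k x) \<le> 1 / 2 - exp (- x) / 2"
      using bound abs_ge_minus_self[of "a * avg k x"] by linarith
    moreover have "a * avg k x \<le> 1 / 2 - exp (- x) / 2"
      using bound abs_ge_self[of "a * avg k x"] by linarith
    moreover have "avg k' x = a * avg k x + 1 / 2 - exp (- x) / 2"
      using avg_linear[OF k Linf_const[of 1], of a "1 / 2" x] avg_const[OF x, of 1] by (simp add: k'_def)
    ultimately show ?thesis
      using exp_gt_zero[of "- x"] by linarith
  qed
  then have "\<phi> (avg_prod k' f) = \<phi> (avg_prod k' (\<lambda>_. 1)) * \<phi> f"
    by (rule extreme_point_avg_prod_of_unit[OF ext k' _ f])
  moreover have "\<phi> (avg_prod k' g) = a * \<phi> (avg_prod k g) + 1 / 2 * \<phi> g" if g: "g \<in> Linf" for g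
    using avg_prod_linear[OF k Linf_const, of g a "1 / 2"]
      mean_linear[OF mean Linf_avg_prod[OF g k] Linf_avg_prod[OF g Linf_const], of a "1 / 2"]
      R_means_avg_prod_one[OF \<phi> g]
    by (simp add: k'_def avg_prod_commute[of _ g])
  moreover have "\<phi> (avg_prod k (\<lambda>_. 1)) = \<phi> k"
    using R_means_avg_prod_one[OF \<phi> k] by (simp add: avg_prod_commute)
  ultimately have "a * \<phi> (avg_prod k f) = a * (\<phi> k * \<phi> f)"
    using f mean_const[OF mean] by (simp add: algebra_simps)
  then show ?thesis using a by simp
qed


section \<open>Extreme points are of the form chi\<close>

lemma frequently_small_avg:
  assumes \<phi>: "\<phi> \<in> R_means" and h: "h \<in> Linf" and zero: "\<phi> (avg_prod h h) = 0" and "e > 0"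
  shows "\<exists>\<^sub>F x in at_top. \<bar>avg h x\<bar> < e"
proof (rule ccontr)
  assume "\<not> ?thesis"
  then have large: "eventually (\<lambda>x. e \<le> \<bar>avg h x\<bar>) at_top"
    by (simp add: not_frequently not_less)
  have "e\<^sup>2 \<le> \<phi> (avg_prod h h)"
  proof (rule R_means_ge[OF \<phi> Linf_avg_prod[OF h h]])
    fix d :: real assume "d > 0"
    show "eventually (\<lambda>x. e\<^sup>2 - d \<le> avg (avg_prod h h) x) at_top"
      using large eventually_ge_at_top[of 0]
    proof eventually_elim
      case (elim x)
      have "e\<^sup>2 \<le> \<bar>avg h x\<bar>\<^sup>2" using elim(1) \<open>e > 0\<close> by (intro power_mono) auto
      then show ?case using avg_avg_prod[OF h h elim(2)] \<open>d > 0\<close> by (simp add: power2_eq_square)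
    qed
  qed
  then show False using zero \<open>e > 0\<close> by (simp add: not_le[symmetric])
qed

definition near_set :: "((real \<Rightarrow> real) \<Rightarrow> real) \<Rightarrow> (real \<Rightarrow> real) \<Rightarrow> real \<Rightarrow> real \<Rightarrow> real set" where
  "near_set \<phi> g e M = {x. M \<le> x \<and> 0 \<le> x \<and> \<bar>avg (\<lambda>x. g x - \<phi> g) x\<bar> < e}"

lemma extreme_point_centered_sq:
  assumes ext: "\<phi> \<in> extreme_points R_means" and g: "g \<in> Linf"
  defines "h \<equiv> \<lambda>x. g x - \<phi> g"
  shows "h \<in> Linf" and "\<phi> (avg_prod h h) = 0"
proof -
  have mean: "is_mean \<phi>" using ext by (simp add: extreme_points_def R_means_def)
  show h: "h \<in> Linf" unfolding h_def by (intro Linf_diff g Linf_const)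
  have "\<phi> h = 0" using mean_diff[OF mean g Linf_const] mean_const[OF mean] by (simp add: h_def)
  then show "\<phi> (avg_prod h h) = 0" using extreme_point_multiplicative[OF ext h h] by simp
qed

lemma near_set_nonempty:
  assumes ext: "\<phi> \<in> extreme_points R_means" and g: "g \<in> Linf" and "e > 0"
  shows "near_set \<phi> g e M \<noteq> {}"
proof -
  have \<phi>: "\<phi> \<in> R_means" using ext by (simp add: extreme_points_def)
  have "\<exists>\<^sub>F x in at_top. \<bar>avg (\<lambda>x. g x - \<phi> g) x\<bar> < e \<and> max M 0 \<le> x"
    using frequently_small_avg[OF \<phi> extreme_point_centered_sq[OF ext g] \<open>e > 0\<close>]
    by (rule frequently_eventually_frequently) (rule eventually_ge_at_top)
  then show ?thesis by (auto simp: near_set_def dest: frequently_ex)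
qed

lemma near_set_directed:
  assumes ext: "\<phi> \<in> extreme_points R_means" and g1: "g1 \<in> Linf" and g2: "g2 \<in> Linf"
    and "e1 > 0" "e2 > 0"
  obtains G where "G \<in> Linf"
    "near_set \<phi> G ((min e1 e2)\<^sup>2) (max M1 M2) \<subseteq> near_set \<phi> g1 e1 M1 \<inter> near_set \<phi> g2 e2 M2"
proof -
  have mean: "is_mean \<phi>" using ext by (simp add: extreme_points_def R_means_def)
  define h1 where "h1 = (\<lambda>x. g1 x - \<phi> g1)"
  define h2 where "h2 = (\<lambda>x. g2 x - \<phi> g2)"
  note c1 = extreme_point_centered_sq[OF ext g1, folded h1_def]
  note c2 = extreme_point_centered_sq[OF ext g2, folded h2_def]
  define G where "G = (\<lambda>x. avg_prod h1 h1 x + avg_prod h2 h2 x)"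
  have G: "G \<in> Linf" unfolding G_def by (intro Linf_add Linf_avg_prod c1(1) c2(1))
  have "\<phi> G = 0"
    using mean_add[OF mean Linf_avg_prod[OF c1(1) c1(1)] Linf_avg_prod[OF c2(1) c2(1)]] c1(2) c2(2)
    by (simp add: G_def)
  have "x \<in> near_set \<phi> g1 e1 M1 \<inter> near_set \<phi> g2 e2 M2"
    if x: "x \<in> near_set \<phi> G ((min e1 e2)\<^sup>2) (max M1 M2)" for x
  proof -
    have x0: "0 \<le> x" and "\<bar>avg G x\<bar> < (min e1 e2)\<^sup>2"
      using x \<open>\<phi> G = 0\<close> by (simp_all add: near_set_def)
    moreover have "avg G x = (avg h1 x)\<^sup>2 + (avg h2 x)\<^sup>2"
      using avg_add[OF Linf_avg_prod[OF c1(1) c1(1)] Linf_avg_prod[OF c2(1) c2(1)]]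
        avg_avg_prod[OF c1(1) c1(1) x0] avg_avg_prod[OF c2(1) c2(1) x0]
      by (simp add: G_def power2_eq_square)
    ultimately have "(avg h1 x)\<^sup>2 < (min e1 e2)\<^sup>2" "(avg h2 x)\<^sup>2 < (min e1 e2)\<^sup>2"
      using abs_ge_self[of "avg G x"] zero_le_power2[of "avg h1 x"] zero_le_power2[of "avg h2 x"]
      by linarith+
    then have "\<bar>avg h1 x\<bar> < min e1 e2" "\<bar>avg h2 x\<bar> < min e1 e2"
      using \<open>e1 > 0\<close> \<open>e2 > 0\<close> power2_less_imp_less[of "\<bar>avg h1 x\<bar>" "min e1 e2"]
        power2_less_imp_less[of "\<bar>avg h2 x\<bar>" "min e1 e2"] by simp_all
    then show ?thesis using x by (auto simp: near_set_def h1_def h2_def)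
  qed
  then show ?thesis using that G by blast
qed

lemma tendsto_avg_of_near_sets:
  assumes g: "g \<in> Linf" and U_at_top: "U \<le> at_top"
    and near: "\<And>e. e > 0 \<Longrightarrow> eventually (\<lambda>x. x \<in> near_set \<phi> g e 0) U"
  shows "(avg g \<longlongrightarrow> \<phi> g) U"
proof (rule tendstoI)
  fix e :: real assume "e > 0"
  have "eventually (\<lambda>x. \<bar>\<phi> g\<bar> * exp (- x) < e / 2) U"
    using order_tendstoD(2)[OF tendsto_exp_minus_at_top, of "e / 2"] \<open>e > 0\<close> U_at_top
    by (auto intro: filter_leD)
  then show "eventually (\<lambda>x. dist (avg g x) (\<phi> g) < e) U"
    using near[OF half_gt_zero[OF \<open>e > 0\<close>]]
  proof eventually_elim
    case (elim x)
    then have "\<bar>avg g x - \<phi> g * (1 - exp (- x))\<bar> < e / 2"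
      using avg_diff[OF g Linf_const, of "\<phi> g" x] avg_const[of x "\<phi> g"] by (simp add: near_set_def)
    then show ?case
      using elim(1) abs_triangle_ineq4[of "avg g x - \<phi> g * (1 - exp (- x))" "\<phi> g * exp (- x)"]
      by (simp add: dist_real_def abs_mult algebra_simps)
  qed
qed

lemma extreme_point_ultrafilter:
  assumes ext: "\<phi> \<in> extreme_points R_means"
  obtains U where "ultrafilter U" "U \<le> at_top" "\<And>g. g \<in> Linf \<Longrightarrow> (avg g \<longlongrightarrow> \<phi> g) U"
proof -
  define I :: "((real \<Rightarrow> real) \<times> real \<times> real) set" where "I = {(g, e, M). g \<in> Linf \<and> 0 < e}"
  obtain U where U: "ultrafilter U"
    and near: "\<And>g e M. g \<in> Linf \<Longrightarrow> e > 0 \<Longrightarrow> eventually (\<lambda>x. x \<in> near_set \<phi> g e M) U"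
  proof (rule ultrafilter_through_directed[of I "\<lambda>(g, e, M). near_set \<phi> g e M"])
    have "((\<lambda>_. 0), 1, 0) \<in> I" by (simp add: I_def)
    then show "I \<noteq> {}" by blast
    show "\<And>i. i \<in> I \<Longrightarrow> (case i of (g, e, M) \<Rightarrow> near_set \<phi> g e M) \<noteq> {}"
      using near_set_nonempty[OF ext] by (auto simp: I_def)
    fix i j assume "i \<in> I" "j \<in> I"
    then obtain g1 e1 M1 g2 e2 M2 where ij: "i = (g1, e1, M1)" "j = (g2, e2, M2)"
      and g: "g1 \<in> Linf" "g2 \<in> Linf" and e: "e1 > 0" "e2 > 0" by (auto simp: I_def)
    obtain G where "G \<in> Linf"
      "near_set \<phi> G ((min e1 e2)\<^sup>2) (max M1 M2) \<subseteq> near_set \<phi> g1 e1 M1 \<inter> near_set \<phi> g2 e2 M2"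
      by (rule near_set_directed[OF ext g e])
    moreover have "(G, (min e1 e2)\<^sup>2, max M1 M2) \<in> I"
      using \<open>G \<in> Linf\<close> \<open>e1 > 0\<close> \<open>e2 > 0\<close> by (simp add: I_def)
    ultimately show "\<exists>l\<in>I. (case l of (g, e, M) \<Rightarrow> near_set \<phi> g e M) \<subseteq>
        (case i of (g, e, M) \<Rightarrow> near_set \<phi> g e M) \<inter> (case j of (g, e, M) \<Rightarrow> near_set \<phi> g e M)"
      unfolding ij by (intro bexI[of _ "(G, (min e1 e2)\<^sup>2, max M1 M2)"]) simp_all
  qed (auto simp: I_def)
  have U_at_top: "U \<le> at_top"
  proof (rule filter_leI)
    fix P :: "real \<Rightarrow> bool" assume "eventually P at_top"
    then obtain N where "\<And>x. x \<ge> N \<Longrightarrow> P x" by (auto simp: eventually_at_top_linorder)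
    then show "eventually P U"
      using near[of "\<lambda>_. 0" 1 N] by (auto simp: near_set_def elim!: eventually_mono)
  qed
  have "(avg g \<longlongrightarrow> \<phi> g) U" if "g \<in> Linf" for g
    using near[OF that] by (rule tendsto_avg_of_near_sets[OF that U_at_top])
  with U U_at_top show ?thesis by (rule that)
qed


lemma free_ultrafilter_nat_floor:
  assumes U: "ultrafilter U" and U_at_top: "U \<le> at_top"
  shows "free_ultrafilter_nat (filtermap (\<lambda>x::real. nat \<lfloor>x\<rfloor>) U)"
  unfolding free_ultrafilter_nat_def cofinite_eq_sequentially
proof
  show "ultrafilter (filtermap (\<lambda>x. nat \<lfloor>x\<rfloor>) U)" by (rule ultrafilter_filtermap[OF U])
  show "filtermap (\<lambda>x. nat \<lfloor>x\<rfloor>) U \<le> sequentially"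
  proof (rule filter_leI)
    fix P assume "eventually P sequentially"
    then obtain N where N: "\<And>n. n \<ge> N \<Longrightarrow> P n" by (auto simp: eventually_sequentially)
    have "eventually (\<lambda>x. real N \<le> x) U" by (rule filter_leD[OF U_at_top eventually_ge_at_top])
    then show "eventually P (filtermap (\<lambda>x. nat \<lfloor>x\<rfloor>) U)"
      unfolding eventually_filtermap by (rule eventually_mono) (auto intro!: N simp: le_nat_iff le_floor_iff)
  qed
qed

lemma tendsto_avg_floor_shift:
  assumes f: "f \<in> Linf" and U_at_top: "U \<le> at_top" and T: "(frac \<longlongrightarrow> T) U" "T \<in> {0..1}"
  shows "((\<lambda>x. avg f (real (nat \<lfloor>x\<rfloor>) + T) - avg f x) \<longlongrightarrow> 0) U"
proof -
  obtain B where B: "B \<ge> 0" "AE x in lebesgue. x \<ge> 0 \<longrightarrow> \<bar>f x\<bar> \<le> B" using Linf_bound[OF f] .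
  show ?thesis
  proof (rule Lim_null_comparison)
    show "eventually (\<lambda>x. norm (avg f (real (nat \<lfloor>x\<rfloor>) + T) - avg f x) \<le> 2 * B * \<bar>T - frac x\<bar>) U"
      using filter_leD[OF U_at_top eventually_ge_at_top[of 0]]
    proof eventually_elim
      case (elim x)
      have "\<bar>avg f (real (nat \<lfloor>x\<rfloor>) + T) - avg f x\<bar> \<le> 2 * B * \<bar>real (nat \<lfloor>x\<rfloor>) + T - x\<bar>"
        using T(2) elim by (intro avg_lipschitz[OF f B]) auto
      also have "real (nat \<lfloor>x\<rfloor>) + T - x = T - frac x"
        using elim by (simp add: frac_def)
      finally show ?case by simp
    qed
    show "((\<lambda>x. 2 * B * \<bar>T - frac x\<bar>) \<longlongrightarrow> 0) U"
      using tendsto_mult_right_zero[OF tendsto_rabs_zero[OF LIM_zero[OF T(1)]], of "2 * B"]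
      by (simp add: abs_minus_commute)
  qed
qed

lemma ultrafilter_limit_in_R_tilde:
  assumes U: "ultrafilter U" and U_at_top: "U \<le> at_top" and mean: "is_mean \<phi>"
    and lim: "\<And>g. g \<in> Linf \<Longrightarrow> (avg g \<longlongrightarrow> \<phi> g) U"
  shows "\<phi> \<in> R_tilde"
proof -
  have U_nontriv: "U \<noteq> bot" using U by (simp add: ultrafilter_def)
  have "eventually (\<lambda>x. \<bar>frac x\<bar> \<le> 1) U" by (simp add: frac_lt_1 less_imp_le)
  then obtain T where T: "(frac \<longlongrightarrow> T) U" by (rule ultrafilter_bounded_tendsto[OF U])
  have T01: "T \<in> {0..1}"
    using tendsto_lowerbound[OF T _ U_nontriv, of 0] tendsto_upperbound[OF T _ U_nontriv, of 1]
    by (auto simp: frac_lt_1 less_imp_le)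
  define \<eta> where "\<eta> = filtermap (\<lambda>x::real. nat \<lfloor>x\<rfloor>) U"
  have \<eta>: "free_ultrafilter_nat \<eta>" unfolding \<eta>_def by (rule free_ultrafilter_nat_floor[OF U U_at_top])
  have "chi \<eta> T f = \<phi> f" if f: "f \<in> Linf" for f
  proof -
    from tendsto_add[OF tendsto_avg_floor_shift[OF f U_at_top T T01] lim[OF f]]
    have "(avg f \<longlongrightarrow> \<phi> f) (filtermap (\<lambda>x. real (nat \<lfloor>x\<rfloor>) + T) U)"
      by (simp add: tendsto_compose_filtermap[symmetric] o_def)
    then have "(avg f \<longlongrightarrow> \<phi> f) (omega_filter \<eta> T)"
      by (simp add: omega_filter_def \<eta>_def filtermap_filtermap)
    then show ?thesis
      using f tendsto_Lim[OF omega_filter_neq_bot[OF \<eta>]] by (simp add: chi_def)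
  qed
  then have "\<phi> = chi \<eta> T"
    using mean_outside_Linf[OF mean] by (auto simp: chi_def fun_eq_iff)
  then show ?thesis using \<eta> T01 by (auto simp: R_tilde_def)
qed

theorem theorem3p1:
  shows "extreme_points R_means = R_tilde"
proof
  show "extreme_points R_means \<subseteq> R_tilde"
  proof
    fix \<phi> assume ext: "\<phi> \<in> extreme_points R_means"
    then have mean: "is_mean \<phi>" by (simp add: extreme_points_def R_means_def)
    show "\<phi> \<in> R_tilde"
    proof (rule extreme_point_ultrafilter[OF ext])
      fix U assume "ultrafilter U" "U \<le> at_top" "\<And>g. g \<in> Linf \<Longrightarrow> (avg g \<longlongrightarrow> \<phi> g) U"
      then show "\<phi> \<in> R_tilde" by (rule ultrafilter_limit_in_R_tilde[OF _ _ mean])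
    qed
  qed
  show "R_tilde \<subseteq> extreme_points R_means"
    unfolding R_tilde_def using chi_extreme_point by blast
qed

end
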